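(* Let $C_2\xrightarrow{\partial_2}C_1\xrightarrow{\partial_1}C_0$ be a 2-crossed module with Peiffer lifting $\{-,-\}$. Let $P_3\subseteq C_1$ be the (normal) subgroup generated by all $\langle\langle x,y\rangle,z\rangle$ and $\langle x,\langle y,z\rangle\rangle$, and $P_3'\subseteq C_2$ the (normal) subgroup generated by all $\{\langle x,y\rangle,z\}$ and $\{x,\langle y,z\rangle\}$, for $x,y,z\in C_1$, where $\langle x,y\rangle={}^{\partial_1x}y\,xy^{-1}x^{-1}$. Put $M=C_1/P_3$, $L=C_2/P_3'$, $N=C_0$, with quotient maps $q_1:C_1\to M$, $q_2:C_2\to L$. Then $\partial:M\to N$, $\partial(q_1x)=\partial_1x$, and $\delta:L\to M$, $\delta(q_2 l)=q_1\partial_2 l$, are well-defined homomorphisms ($\partial_1(P_3)=1$, $\partial_2(P_3')=P_3$); with $C=(M^{cr})^{ab}$ and $x\mapsto\bar x$ the quotient $M\to C$, the formula $\omega(\overline{q_1x}\otimes\overline{q_1y})=q_2\{x,y\}$ ($x,y\in C_1$) defines a homomorphism $\omega:C\otimes C\to L$, and, with the $N$-actions induced from those of the 2-crossed module, $(\omega,\delta,\partial)$, i.e. $C\otimes C\xrightarrow{\omega}L\xrightarrow{\delta}M\xrightarrow{\partial}N$, is a quadratic module.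
   Context: A 2-crossed module consists of a complex of groups $C_2\xrightarrow{\partial_2}C_1\xrightarrow{\partial_1}C_0$ ($\partial_1\partial_2=1$), actions of $C_0$ on $C_1$ and $C_2$ with $\partial_2,\partial_1$ equivariant ($C_0$ acting on itself by conjugation), and a $C_0$-equivariant function $\{-,-\}:C_1\times C_1\to C_2$ such that for $l,l'\in C_2$, $m,m',m''\in C_1$, $n\in C_0$: 2CM1 $\partial_2\{m,m'\}=({}^{\partial_1 m}m')mm'^{-1}m^{-1}$; 2CM2 $\{\partial_2 l,\partial_2 l'\}=[l',l]$; 2CM3 (i) $\{mm',m''\}={}^{\partial_1 m}\{m',m''\}\{m,m'm''m'^{-1}\}$, (ii) $\{m,m'm''\}=\{m,m'\}\,{}^{mm'm^{-1}}\{m,m''\}$ where ${}^{x}l:=\{\partial_2 l,x\}l$; 2CM4 $\{m,\partial_2 l\}\{\partial_2 l,m\}={}^{\partial_1 m}l\,l^{-1}$; 2CM5 ${}^{n}\{m,m'\}=\{{}^{n}m,{}^{n}m'\}$. A pre-crossed module is a homomorphism $\partial:M\to N$ with an $N$-action on $M$ such that $\partial({}^{n}m)=n\partial(m)n^{-1}$. Its Peiffer commutator is $\langle x,y\rangle={}^{\partial x}y\,xy^{-1}x^{-1}$; $P_2(\partial)$ is the subgroup generated by Peiffer commutators, $P_3(\partial)$ the subgroup generated by Peiffer commutators of length 3 ($\langle\langle x,y\rangle,z\rangle$, $\langle x,\langle y,z\rangle\rangle$). A nil(2)-module is a pre-crossed module with $P_3(\partial)=1$. $M^{cr}=M/P_2(\partial)$,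 $G^{ab}=G/[G,G]$, and $C=(M^{cr})^{ab}$; $C\otimes C$ is the tensor product of abelian groups. A quadratic module $(\omega,\delta,\partial)$ is a diagram of homomorphisms $C\otimes C\xrightarrow{\omega}L\xrightarrow{\delta}M\xrightarrow{\partial}N$ with $w:C\otimes C\to M$ such that: QM1 $\partial:M\to N$ is a nil(2)-module, $C=(M^{cr})^{ab}$, $x\mapsto\bar x$ the quotient $M\to C$, and $w(\bar x\otimes\bar y)=\langle x,y\rangle$; QM2 $\partial\delta=1$ and $\delta\omega=w$, i.e. $\delta\omega(\bar x\otimes\bar y)={}^{\partial x}y\,xy^{-1}x^{-1}$; QM3 $L$ is an $N$-group, all maps are $N$-equivariant, and ${}^{\partial x}a=\omega\big((\bar x\otimes\overline{\delta a})(\overline{\delta a}\otimes\bar x)\big)a$ for $a\in L$, $x\in M$; QM4 $\omega(\overline{\delta a}\otimes\overline{\delta b})=[b,a]$ for $a,b\in L$. *)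

theory Defs
  imports "HOL-Algebra.Free_Abelian_Groups" "HOL-Algebra.Generated_Groups"
begin

definition aut_action :: "('n,'a) monoid_scheme \<Rightarrow> ('g,'b) monoid_scheme \<Rightarrow> ('n \<Rightarrow> 'g \<Rightarrow> 'g) \<Rightarrow> bool"
  where "aut_action N G act \<longleftrightarrow>
     (\<forall>n\<in>carrier N. act n \<in> hom G G) \<and>
     (\<forall>x\<in>carrier G. act \<one>\<^bsub>N\<^esub> x = x) \<and>
     (\<forall>n\<in>carrier N. \<forall>n'\<in>carrier N. \<forall>x\<in>carrier G. act (n \<otimes>\<^bsub>N\<^esub> n') x = act n (act n' x))"

definition pre_crossed_module ::
  "('m,'a) monoid_scheme \<Rightarrow> ('n,'b) monoid_scheme \<Rightarrow> ('m \<Rightarrow> 'n) \<Rightarrow> ('n \<Rightarrow> 'm \<Rightarrow> 'm) \<Rightarrow> bool"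
  where "pre_crossed_module M N d act \<longleftrightarrow>
     group M \<and> group N \<and> d \<in> hom M N \<and> aut_action N M act \<and>
     (\<forall>n\<in>carrier N. \<forall>m\<in>carrier M. d (act n m) = n \<otimes>\<^bsub>N\<^esub> d m \<otimes>\<^bsub>N\<^esub> inv\<^bsub>N\<^esub> n)"

definition peiffer :: "('m,'a) monoid_scheme \<Rightarrow> ('m \<Rightarrow> 'n) \<Rightarrow> ('n \<Rightarrow> 'm \<Rightarrow> 'm) \<Rightarrow> 'm \<Rightarrow> 'm \<Rightarrow> 'm"
  where "peiffer M d act x y = act (d x) y \<otimes>\<^bsub>M\<^esub> x \<otimes>\<^bsub>M\<^esub> inv\<^bsub>M\<^esub> y \<otimes>\<^bsub>M\<^esub> inv\<^bsub>M\<^esub> x"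

definition P2 :: "('m,'a) monoid_scheme \<Rightarrow> ('m \<Rightarrow> 'n) \<Rightarrow> ('n \<Rightarrow> 'm \<Rightarrow> 'm) \<Rightarrow> 'm set"
  where "P2 M d act = generate M {peiffer M d act x y | x y. x \<in> carrier M \<and> y \<in> carrier M}"

definition P3 :: "('m,'a) monoid_scheme \<Rightarrow> ('m \<Rightarrow> 'n) \<Rightarrow> ('n \<Rightarrow> 'm \<Rightarrow> 'm) \<Rightarrow> 'm set"
  where "P3 M d act = generate M
     ({peiffer M d act (peiffer M d act x y) z | x y z. x \<in> carrier M \<and> y \<in> carrier M \<and> z \<in> carrier M}
      \<union> {peiffer M d act x (peiffer M d act y z) | x y z. x \<in> carrier M \<and> y \<in> carrier M \<and> z \<in> carrier M})"

definition nil2_module ::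
  "('m,'a) monoid_scheme \<Rightarrow> ('n,'b) monoid_scheme \<Rightarrow> ('m \<Rightarrow> 'n) \<Rightarrow> ('n \<Rightarrow> 'm \<Rightarrow> 'm) \<Rightarrow> bool"
  where "nil2_module M N d act \<longleftrightarrow> pre_crossed_module M N d act \<and> P3 M d act = {\<one>\<^bsub>M\<^esub>}"

definition abelianization :: "('g,'a) monoid_scheme \<Rightarrow> 'g set monoid"
  where "abelianization G = G Mod (derived G (carrier G))"

definition ab_class :: "('g,'a) monoid_scheme \<Rightarrow> 'g \<Rightarrow> 'g set"
  where "ab_class G x = derived G (carrier G) #>\<^bsub>G\<^esub> x"

definition Mcr :: "('m,'a) monoid_scheme \<Rightarrow> ('m \<Rightarrow> 'n) \<Rightarrow> ('n \<Rightarrow> 'm \<Rightarrow> 'm) \<Rightarrow> 'm set monoid"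
  where "Mcr M d act = M Mod (P2 M d act)"

definition Cgrp :: "('m,'a) monoid_scheme \<Rightarrow> ('m \<Rightarrow> 'n) \<Rightarrow> ('n \<Rightarrow> 'm \<Rightarrow> 'm) \<Rightarrow> 'm set set monoid"
  where "Cgrp M d act = abelianization (Mcr M d act)"

definition bar :: "('m,'a) monoid_scheme \<Rightarrow> ('m \<Rightarrow> 'n) \<Rightarrow> ('n \<Rightarrow> 'm \<Rightarrow> 'm) \<Rightarrow> 'm \<Rightarrow> 'm set set"
  where "bar M d act x = ab_class (Mcr M d act) (P2 M d act #>\<^bsub>M\<^esub> x)"

definition tensor_rels :: "('c,'a) monoid_scheme \<Rightarrow> ('c \<times> 'c \<Rightarrow>\<^sub>0 int) set"
  where "tensor_rels A =
     {frag_of (a \<otimes>\<^bsub>A\<^esub> a', b) - frag_of (a, b) - frag_of (a', b) | a a' b.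
        a \<in> carrier A \<and> a' \<in> carrier A \<and> b \<in> carrier A}
   \<union> {frag_of (a, b \<otimes>\<^bsub>A\<^esub> b') - frag_of (a, b) - frag_of (a, b') | a b b'.
        a \<in> carrier A \<and> b \<in> carrier A \<and> b' \<in> carrier A}"

definition tensor_free :: "('c,'a) monoid_scheme \<Rightarrow> ('c \<times> 'c \<Rightarrow>\<^sub>0 int) monoid"
  where "tensor_free A = free_Abelian_group (carrier A \<times> carrier A)"

definition tensor_sub :: "('c,'a) monoid_scheme \<Rightarrow> ('c \<times> 'c \<Rightarrow>\<^sub>0 int) set"
  where "tensor_sub A = generate (tensor_free A) (tensor_rels A)"

definition tensor :: "('c,'a) monoid_scheme \<Rightarrow> ('c \<times> 'c \<Rightarrow>\<^sub>0 int) set monoid"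
  where "tensor A = tensor_free A Mod tensor_sub A"

definition tens :: "('c,'a) monoid_scheme \<Rightarrow> 'c \<Rightarrow> 'c \<Rightarrow> ('c \<times> 'c \<Rightarrow>\<^sub>0 int) set"
  where "tens A a b = tensor_sub A #>\<^bsub>tensor_free A\<^esub> frag_of (a, b)"

definition commutator :: "('g,'a) monoid_scheme \<Rightarrow> 'g \<Rightarrow> 'g \<Rightarrow> 'g"
  where "commutator G a b = a \<otimes>\<^bsub>G\<^esub> b \<otimes>\<^bsub>G\<^esub> inv\<^bsub>G\<^esub> a \<otimes>\<^bsub>G\<^esub> inv\<^bsub>G\<^esub> b"

definition quadratic_module ::
  "('l,'a) monoid_scheme \<Rightarrow> ('m,'b) monoid_scheme \<Rightarrow> ('n,'c) monoid_scheme \<Rightarrow>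
   (('m set set \<times> 'm set set \<Rightarrow>\<^sub>0 int) set \<Rightarrow> 'l) \<Rightarrow> ('l \<Rightarrow> 'm) \<Rightarrow> ('m \<Rightarrow> 'n) \<Rightarrow>
   ('n \<Rightarrow> 'm \<Rightarrow> 'm) \<Rightarrow> ('n \<Rightarrow> 'l \<Rightarrow> 'l) \<Rightarrow> bool"
  where "quadratic_module L M N \<omega> \<delta> d actM actL \<longleftrightarrow>
    (let C = Cgrp M d actM; T = tensor C; b = bar M d actM; w = peiffer M d actM in
     \<comment> \<open>QM1\<close>
     nil2_module M N d actM \<and>
     (\<exists>wm. wm \<in> hom T M \<and> (\<forall>x\<in>carrier M. \<forall>y\<in>carrier M. wm (tens C (b x) (b y)) = w x y)) \<and>
     \<comment> \<open>QM2 (and the types of omega, delta)\<close>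
     group L \<and> \<omega> \<in> hom T L \<and> \<delta> \<in> hom L M \<and>
     (\<forall>a\<in>carrier L. d (\<delta> a) = \<one>\<^bsub>N\<^esub>) \<and>
     (\<forall>x\<in>carrier M. \<forall>y\<in>carrier M. \<delta> (\<omega> (tens C (b x) (b y))) = w x y) \<and>
     \<comment> \<open>QM3: L is an N-group, maps N-equivariant (action on C\<otimes>C induced from M,
        stated on the generating elementary tensors)\<close>
     aut_action N L actL \<and>
     (\<forall>n\<in>carrier N. \<forall>x\<in>carrier M. \<forall>y\<in>carrier M.
        \<omega> (tens C (b (actM n x)) (b (actM n y))) = actL n (\<omega> (tens C (b x) (b y)))) \<and>
     (\<forall>n\<in>carrier N. \<forall>a\<in>carrier L. \<delta> (actL n a) = actM n (\<delta> a)) \<and>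
     (\<forall>a\<in>carrier L. \<forall>x\<in>carrier M.
        actL (d x) a = \<omega> (tens C (b x) (b (\<delta> a)) \<otimes>\<^bsub>T\<^esub> tens C (b (\<delta> a)) (b x)) \<otimes>\<^bsub>L\<^esub> a) \<and>
     \<comment> \<open>QM4\<close>
     (\<forall>a\<in>carrier L. \<forall>c\<in>carrier L. \<omega> (tens C (b (\<delta> a)) (b (\<delta> c))) = commutator L c a))"

definition two_crossed_module ::
  "('c2,'a) monoid_scheme \<Rightarrow> ('c1,'b) monoid_scheme \<Rightarrow> ('c0,'c) monoid_scheme \<Rightarrow>
   ('c2 \<Rightarrow> 'c1) \<Rightarrow> ('c1 \<Rightarrow> 'c0) \<Rightarrow> ('c0 \<Rightarrow> 'c1 \<Rightarrow> 'c1) \<Rightarrow> ('c0 \<Rightarrow> 'c2 \<Rightarrow> 'c2) \<Rightarrow>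
   ('c1 \<Rightarrow> 'c1 \<Rightarrow> 'c2) \<Rightarrow> bool"
  where "two_crossed_module C2 C1 C0 d2 d1 a1 a2 pf \<longleftrightarrow>
    (let xact = (\<lambda>x l. pf (d2 l) x \<otimes>\<^bsub>C2\<^esub> l) in
     group C2 \<and> group C1 \<and> group C0 \<and>
     d2 \<in> hom C2 C1 \<and> d1 \<in> hom C1 C0 \<and> (\<forall>l\<in>carrier C2. d1 (d2 l) = \<one>\<^bsub>C0\<^esub>) \<and>
     aut_action C0 C1 a1 \<and> aut_action C0 C2 a2 \<and>
     (\<forall>n\<in>carrier C0. \<forall>l\<in>carrier C2. d2 (a2 n l) = a1 n (d2 l)) \<and>
     (\<forall>n\<in>carrier C0. \<forall>m\<in>carrier C1. d1 (a1 n m) = n \<otimes>\<^bsub>C0\<^esub> d1 m \<otimes>\<^bsub>C0\<^esub> inv\<^bsub>C0\<^esub> n) \<and>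
     (\<forall>m\<in>carrier C1. \<forall>m'\<in>carrier C1. pf m m' \<in> carrier C2) \<and>
     \<comment> \<open>2CM1\<close>
     (\<forall>m\<in>carrier C1. \<forall>m'\<in>carrier C1.
        d2 (pf m m') = a1 (d1 m) m' \<otimes>\<^bsub>C1\<^esub> m \<otimes>\<^bsub>C1\<^esub> inv\<^bsub>C1\<^esub> m' \<otimes>\<^bsub>C1\<^esub> inv\<^bsub>C1\<^esub> m) \<and>
     \<comment> \<open>2CM2\<close>
     (\<forall>l\<in>carrier C2. \<forall>l'\<in>carrier C2. pf (d2 l) (d2 l') = commutator C2 l' l) \<and>
     \<comment> \<open>2CM3 (i)\<close>
     (\<forall>m\<in>carrier C1. \<forall>m'\<in>carrier C1. \<forall>m''\<in>carrier C1.
        pf (m \<otimes>\<^bsub>C1\<^esub> m') m'' =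
          a2 (d1 m) (pf m' m'') \<otimes>\<^bsub>C2\<^esub> pf m (m' \<otimes>\<^bsub>C1\<^esub> m'' \<otimes>\<^bsub>C1\<^esub> inv\<^bsub>C1\<^esub> m')) \<and>
     \<comment> \<open>2CM3 (ii)\<close>
     (\<forall>m\<in>carrier C1. \<forall>m'\<in>carrier C1. \<forall>m''\<in>carrier C1.
        pf m (m' \<otimes>\<^bsub>C1\<^esub> m'') =
          pf m m' \<otimes>\<^bsub>C2\<^esub> xact (m \<otimes>\<^bsub>C1\<^esub> m' \<otimes>\<^bsub>C1\<^esub> inv\<^bsub>C1\<^esub> m) (pf m m'')) \<and>
     \<comment> \<open>2CM4\<close>
     (\<forall>m\<in>carrier C1. \<forall>l\<in>carrier C2.
        pf m (d2 l) \<otimes>\<^bsub>C2\<^esub> pf (d2 l) m = a2 (d1 m) l \<otimes>\<^bsub>C2\<^esub> inv\<^bsub>C2\<^esub> l) \<and>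
     \<comment> \<open>2CM5\<close>
     (\<forall>n\<in>carrier C0. \<forall>m\<in>carrier C1. \<forall>m'\<in>carrier C1.
        a2 n (pf m m') = pf (a1 n m) (a1 n m')))"

definition P3' :: "('c2,'a) monoid_scheme \<Rightarrow> ('c1,'b) monoid_scheme \<Rightarrow> ('c1 \<Rightarrow> 'c0) \<Rightarrow>
   ('c0 \<Rightarrow> 'c1 \<Rightarrow> 'c1) \<Rightarrow> ('c1 \<Rightarrow> 'c1 \<Rightarrow> 'c2) \<Rightarrow> 'c2 set"
  where "P3' C2 C1 d1 a1 pf = generate C2
     ({pf (peiffer C1 d1 a1 x y) z | x y z. x \<in> carrier C1 \<and> y \<in> carrier C1 \<and> z \<in> carrier C1}
      \<union> {pf x (peiffer C1 d1 a1 y z) | x y z. x \<in> carrier C1 \<and> y \<in> carrier C1 \<and> z \<in> carrier C1})"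

end

theory Submission
  imports Defs
begin

text \<open>The crux is \<open>\<omega>\<close>: modulo \<open>P3'\<close> the Peiffer lifting \<open>{x, y}\<close> becomes
  bilinear (2CM3), its values commute with each other (2CM2), and it vanishes as soon as one
  argument is a Peiffer commutator. Hence it only depends on the classes of \<open>x\<close> and \<open>y\<close> in
  \<open>C = (M\<^sup>c\<^sup>r)\<^sup>a\<^sup>b\<close> and factors through \<open>C \<otimes> C\<close>. QM3 and QM4 are
  then the images of 2CM4 and 2CM2.\<close>

lemma (in group) normal_generate_if_conj_in_generate:
  assumes S: "S \<subseteq> carrier G"
    and conj: "\<And>s g. s \<in> S \<Longrightarrow> g \<in> carrier G \<Longrightarrow> g \<otimes> s \<otimes> inv g \<in> generate G S"
  shows "generate G S \<lhd> G"
proof (rule normal_invI[OF generate_is_subgroup[OF S]])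
  fix g h assume g: "g \<in> carrier G" and h: "h \<in> generate G S"
  define c where "c x = g \<otimes> x \<otimes> inv g" for x
  have "group_hom G G c"
    by (rule group_hom.intro, unfold_locales)
      (auto simp: c_def hom_def g m_assoc inv_solve_left)
  then have "c ` generate G S = generate G (c ` S)"
    by (simp add: group_hom.generate_img[OF _ S])
  also have "\<dots> \<subseteq> generate G S"
    by (rule generate_subgroup_incl[OF _ generate_is_subgroup[OF S]]) (auto simp: c_def conj g)
  finally show "g \<otimes> h \<otimes> inv g \<in> generate G S"
    using h by (auto simp: c_def)
qed

lemma (in group_hom) hom_commutator:
  "a \<in> carrier G \<Longrightarrow> b \<in> carrier G \<Longrightarrow> h (commutator G a b) = commutator H (h a) (h b)"
  by (simp add: commutator_def)

lemma (in group) commute_if_commutator_one: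
  assumes "a \<in> carrier G" "b \<in> carrier G" "commutator G a b = \<one>"
  shows "a \<otimes> b = b \<otimes> a"
proof -
  have "a \<otimes> b = commutator G a b \<otimes> (b \<otimes> a)"
    using assms(1,2) by (simp add: commutator_def m_assoc inv_solve_left')
  with assms show ?thesis by simp
qed

definition centralizer :: "('g,'a) monoid_scheme \<Rightarrow> 'g set \<Rightarrow> 'g set"
  where "centralizer G S = {g \<in> carrier G. \<forall>s\<in>S. g \<otimes>\<^bsub>G\<^esub> s = s \<otimes>\<^bsub>G\<^esub> g}"

lemma (in group) subgroup_centralizer:
  assumes "S \<subseteq> carrier G"
  shows "subgroup (centralizer G S) G"
proof (rule subgroupI)
  show "centralizer G S \<subseteq> carrier G"
    by (auto simp: centralizer_def)
  have "\<one> \<in> centralizer G S"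
    using assms by (auto simp: centralizer_def)
  then show "centralizer G S \<noteq> {}" by blast
next
  fix g assume g: "g \<in> centralizer G S"
  show "inv g \<in> centralizer G S"
    unfolding centralizer_def
  proof (intro CollectI conjI ballI)
    fix s assume s: "s \<in> S"
    have gs: "g \<in> carrier G" "s \<in> carrier G" "g \<otimes> s = s \<otimes> g"
      using g s assms by (auto simp: centralizer_def)
    have "inv g \<otimes> s = inv g \<otimes> (s \<otimes> g) \<otimes> inv g"
      using gs by (simp add: m_assoc)
    also have "\<dots> = s \<otimes> inv g"
      using gs by (simp flip: gs(3) add: m_assoc[symmetric])
    finally show "inv g \<otimes> s = s \<otimes> inv g" .
  qed (use g in \<open>simp add: centralizer_def\<close>)
next
  fix g h assume "g \<in> centralizer G S" "h \<in> centralizer G S"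
  then show "g \<otimes> h \<in> centralizer G S"
    using assms by (auto simp: centralizer_def) (metis subsetD m_assoc)
qed

lemma (in group) comm_group_subgroup_generated:
  assumes S: "S \<subseteq> carrier G" and comm: "\<And>s t. s \<in> S \<Longrightarrow> t \<in> S \<Longrightarrow> s \<otimes> t = t \<otimes> s"
  shows "comm_group (subgroup_generated G S)"
proof -
  have "generate G S \<subseteq> centralizer G S"
    by (rule generate_subgroup_incl[OF _ subgroup_centralizer[OF S]])
      (use S comm in \<open>auto simp: centralizer_def\<close>)
  then have "S \<subseteq> centralizer G (generate G S)"
    using S generate_incl[OF S] by (auto simp: centralizer_def)
  then have "generate G S \<subseteq> centralizer G (generate G S)"
    by (rule generate_subgroup_incl[OF _ subgroup_centralizer[OF generate_incl[OF S]]])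
  then show ?thesis
    by (intro group.group_comm_groupI) (auto simp: carrier_subgroup_generated Int_absorb1[OF S]
      centralizer_def)
qed

lemma aut_action_image_eq:
  assumes "group N" and act: "aut_action N G act" and K: "K \<subseteq> carrier G"
    and stable: "\<And>m. m \<in> carrier N \<Longrightarrow> act m ` K \<subseteq> K" and n: "n \<in> carrier N"
  shows "act n ` K = K"
proof
  interpret N: group N by fact
  show "act n ` K \<subseteq> K" by (rule stable[OF n])
  show "K \<subseteq> act n ` K"
  proof
    fix u assume u: "u \<in> K"
    have "u = act n (act (inv\<^bsub>N\<^esub> n) u)"
      using act u K n unfolding aut_action_def by (metis N.inv_closed N.r_inv subsetD)
    moreover have "act (inv\<^bsub>N\<^esub> n) u \<in> K"
      using stable u n by blast
    ultimately show "u \<in> act n ` K" by blast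
  qed
qed

lemma aut_action_image_generate:
  assumes "group N" "group G" and act: "aut_action N G act" and S: "S \<subseteq> carrier G"
    and stable: "\<And>m. m \<in> carrier N \<Longrightarrow> act m ` S \<subseteq> S" and n: "n \<in> carrier N"
  shows "act n ` generate G S = generate G S"
proof (rule aut_action_image_eq[OF \<open>group N\<close> act group.generate_incl[OF \<open>group G\<close> S] _ n])
  fix m assume m: "m \<in> carrier N"
  have "group_hom G G (act m)"
    using act m \<open>group G\<close> by (simp add: group_hom_def group_hom_axioms_def aut_action_def)
  then have "act m ` generate G S = generate G (act m ` S)"
    by (simp add: group_hom.generate_img[OF _ S])
  also have "\<dots> \<subseteq> generate G S"
    by (rule group.mono_generate[OF \<open>group G\<close> stable[OF m]])
  finally show "act m ` generate G S \<subseteq> generate G S" .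
qed

lemma aut_action_image_rcos:
  assumes "aut_action N G act" "K \<subseteq> carrier G" "n \<in> carrier N" "x \<in> carrier G"
    and "act n ` K = K"
  shows "act n ` (K #>\<^bsub>G\<^esub> x) = K #>\<^bsub>G\<^esub> act n x"
  using assms coset_hom(2)[of "act n" G G K x] by (simp add: aut_action_def)

lemma aut_action_FactGroup:
  assumes act: "aut_action N G act" and K: "K \<lhd> G"
    and stable: "\<And>n. n \<in> carrier N \<Longrightarrow> act n ` K = K"
  shows "aut_action N (G Mod K) (\<lambda>n X. act n ` X)"
proof -
  interpret K: normal K G by fact
  have act_rcos: "act n ` (K #>\<^bsub>G\<^esub> x) = K #>\<^bsub>G\<^esub> act n x" if "n \<in> carrier N" "x \<in> carrier G" for n x
    by (rule aut_action_image_rcos[OF act K.subset that stable[OF that(1)]])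
  have act_hom: "act n \<in> hom G G" if "n \<in> carrier N" for n
    using act that by (simp add: aut_action_def)
  have act_closed: "act n x \<in> carrier G" if "n \<in> carrier N" "x \<in> carrier G" for n x
    using hom_in_carrier[OF act_hom] that .
  show ?thesis
    unfolding aut_action_def carrier_FactGroup
  proof (intro conjI ballI)
    fix n assume n: "n \<in> carrier N"
    show "(\<lambda>X. act n ` X) \<in> hom (G Mod K) (G Mod K)"
    proof (rule homI)
      fix X assume "X \<in> carrier (G Mod K)"
      then show "act n ` X \<in> carrier (G Mod K)"
        using n by (auto simp: carrier_FactGroup act_rcos act_closed)
    next
      fix X Y assume "X \<in> carrier (G Mod K)" "Y \<in> carrier (G Mod K)"
      then obtain x y where "x \<in> carrier G" "X = K #>\<^bsub>G\<^esub> x" "y \<in> carrier G" "Y = K #>\<^bsub>G\<^esub> y"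
        by (auto simp: carrier_FactGroup)
      with n show "act n ` (X \<otimes>\<^bsub>G Mod K\<^esub> Y) = act n ` X \<otimes>\<^bsub>G Mod K\<^esub> act n ` Y"
        by (simp add: K.rcos_sum act_rcos act_closed hom_mult[OF act_hom[OF n]])
    qed
  next
    fix X assume "X \<in> (#>\<^bsub>G\<^esub>) K ` carrier G"
    then have X: "X \<subseteq> carrier G"
      using K.subset K.r_coset_subset_G by blast
    have "act \<one>\<^bsub>N\<^esub> ` X = (\<lambda>u. u) ` X"
      by (rule image_cong) (use X act in \<open>auto simp: aut_action_def\<close>)
    then show "act \<one>\<^bsub>N\<^esub> ` X = X" by simp
  next
    fix n n' X assume n: "n \<in> carrier N" "n' \<in> carrier N" and "X \<in> (#>\<^bsub>G\<^esub>) K ` carrier G"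
    then have X: "X \<subseteq> carrier G"
      using K.subset K.r_coset_subset_G by blast
    show "act (n \<otimes>\<^bsub>N\<^esub> n') ` X = act n ` act n' ` X"
      unfolding image_image by (rule image_cong) (use X n act in \<open>auto simp: aut_action_def\<close>)
  qed
qed

section \<open>The universal property of the tensor square\<close>

lemma hom_free_Abelian_group_diff:
  assumes h: "h \<in> hom (free_Abelian_group S) H" and "group H"
    and x: "Poly_Mapping.keys x \<subseteq> S" and y: "Poly_Mapping.keys y \<subseteq> S"
  shows "h (x - y) = h x \<otimes>\<^bsub>H\<^esub> inv\<^bsub>H\<^esub> h y"
proof -
  interpret h: group_hom "free_Abelian_group S" H h
    by (simp add: group_hom_def group_hom_axioms_def \<open>group H\<close> h)
  have "x - y = x \<otimes>\<^bsub>free_Abelian_group S\<^esub> inv\<^bsub>free_Abelian_group S\<^esub> y"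
    using y by simp
  also have "h \<dots> = h x \<otimes>\<^bsub>H\<^esub> h (inv\<^bsub>free_Abelian_group S\<^esub> y)"
    using x y h.G.inv_closed[of y] by (intro h.hom_mult) (simp_all del: inv_free_Abelian_group)
  also have "h (inv\<^bsub>free_Abelian_group S\<^esub> y) = inv\<^bsub>H\<^esub> h y"
    by (rule h.hom_inv) (use y in simp)
  finally show ?thesis .
qed

lemma tens_closed: "a \<in> carrier A \<Longrightarrow> b \<in> carrier A \<Longrightarrow> tens A a b \<in> carrier (tensor A)"
  unfolding tens_def tensor_def carrier_FactGroup by (rule imageI) (simp add: tensor_free_def)

lemma tensor_rels_subset:
  assumes "monoid C"
  shows "tensor_rels C \<subseteq> carrier (tensor_free C)"
proof -
  have "Poly_Mapping.keys (frag_of p - frag_of q - frag_of r) \<subseteq> {p, q, r}" for p q r :: "'a \<times> 'a"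
    using keys_diff[of "frag_of p - frag_of q" "frag_of r"] keys_diff[of "frag_of p" "frag_of q"]
    by auto
  with assms show ?thesis
    by (fastforce simp: tensor_rels_def tensor_free_def monoid.m_closed)
qed

lemma normal_tensor_sub: "monoid C \<Longrightarrow> tensor_sub C \<lhd> tensor_free C"
  unfolding tensor_sub_def
  by (intro comm_group.subgroup_imp_normal group.generate_is_subgroup tensor_rels_subset)
    (simp_all add: tensor_free_def abelian_free_Abelian_group)

lemma tensor_universal:
  fixes C :: "('c,'a) monoid_scheme" and H :: "('h,'b) monoid_scheme"
  assumes "monoid C" "comm_group H"
    and f_closed: "\<And>a b. a \<in> carrier C \<Longrightarrow> b \<in> carrier C \<Longrightarrow> f a b \<in> carrier H"
    and f_left: "\<And>a a' b. a \<in> carrier C \<Longrightarrow> a' \<in> carrier C \<Longrightarrow> b \<in> carrier C \<Longrightarrow>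
      f (a \<otimes>\<^bsub>C\<^esub> a') b = f a b \<otimes>\<^bsub>H\<^esub> f a' b"
    and f_right: "\<And>a b b'. a \<in> carrier C \<Longrightarrow> b \<in> carrier C \<Longrightarrow> b' \<in> carrier C \<Longrightarrow>
      f a (b \<otimes>\<^bsub>C\<^esub> b') = f a b \<otimes>\<^bsub>H\<^esub> f a b'"
  obtains \<omega> where "\<omega> \<in> hom (tensor C) H"
    and "\<And>a b. a \<in> carrier C \<Longrightarrow> b \<in> carrier C \<Longrightarrow> \<omega> (tens C a b) = f a b"
proof -
  interpret C: monoid C by fact
  interpret H: comm_group H by fact
  let ?S = "carrier C \<times> carrier C"
  have "case_prod f ` ?S \<subseteq> carrier H"
    using f_closed by auto
  then obtain h where h: "h \<in> hom (free_Abelian_group ?S) H"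
    and h_frag_pair: "\<And>p. p \<in> ?S \<Longrightarrow> h (frag_of p) = case_prod f p"
    using H.free_Abelian_group_universal by blast
  have h_frag: "h (frag_of (a, b)) = f a b" if "a \<in> carrier C" "b \<in> carrier C" for a b
    using h_frag_pair that by simp
  interpret h: group_hom "tensor_free C" H h
    by (simp add: group_hom_def group_hom_axioms_def group_free_Abelian_group H.is_group h
      tensor_free_def)
  have diff3: "h (frag_of p - frag_of q - frag_of r)
      = h (frag_of p) \<otimes>\<^bsub>H\<^esub> inv\<^bsub>H\<^esub> h (frag_of q) \<otimes>\<^bsub>H\<^esub> inv\<^bsub>H\<^esub> h (frag_of r)"
    if "p \<in> ?S" "q \<in> ?S" "r \<in> ?S" for p q r
  proof -
    have "Poly_Mapping.keys (frag_of p - frag_of q) \<subseteq> ?S"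
      using keys_diff[of "frag_of p" "frag_of q"] that by auto
    then show ?thesis
      using that by (simp add: hom_free_Abelian_group_diff[OF h H.is_group])
  qed
  have relator: "h (frag_of (a, b) - frag_of (a1, b1) - frag_of (a2, b2)) = \<one>\<^bsub>H\<^esub>"
    if "a \<in> carrier C" "b \<in> carrier C" "a1 \<in> carrier C" "b1 \<in> carrier C"
      "a2 \<in> carrier C" "b2 \<in> carrier C" "f a b = f a1 b1 \<otimes>\<^bsub>H\<^esub> f a2 b2" for a b a1 b1 a2 b2
    using that f_closed by (simp add: diff3 h_frag H.m_assoc H.m_lcomm[of "f a2 b2"])
  have "h u = \<one>\<^bsub>H\<^esub>" if "u \<in> tensor_rels C" for u
    using that by (auto simp: tensor_rels_def intro!: relator simp: f_left f_right)
  with tensor_rels_subset[OF \<open>monoid C\<close>] have "tensor_rels C \<subseteq> kernel (tensor_free C) H h"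
    by (auto simp: kernel_def)
  then have kernel: "tensor_sub C \<subseteq> kernel (tensor_free C) H h"
    unfolding tensor_sub_def by (rule h.G.generate_subgroup_incl[OF _ h.subgroup_kernel])
  obtain \<omega> where "\<omega> \<in> hom (tensor C) H"
    and "\<And>u. u \<in> carrier (tensor_free C) \<Longrightarrow> \<omega> (tensor_sub C #>\<^bsub>tensor_free C\<^esub> u) = h u"
    using h.FactGroup_universal_kernel[OF normal_tensor_sub[OF \<open>monoid C\<close>] kernel]
    unfolding tensor_def by metis
  then show ?thesis
    using that by (simp add: tens_def tensor_free_def h_frag)
qed

lemma tensor_universal_surj:
  fixes C :: "('c,'a) monoid_scheme" and H :: "('h,'b) monoid_scheme"
  assumes "monoid G" "monoid C" "comm_group H"
    and \<beta>: "\<beta> \<in> hom G C" "\<beta> ` carrier G = carrier C"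
    and f_closed: "\<And>x y. x \<in> carrier G \<Longrightarrow> y \<in> carrier G \<Longrightarrow> f x y \<in> carrier H"
    and f_left: "\<And>x x' y. x \<in> carrier G \<Longrightarrow> x' \<in> carrier G \<Longrightarrow> y \<in> carrier G \<Longrightarrow>
      f (x \<otimes>\<^bsub>G\<^esub> x') y = f x y \<otimes>\<^bsub>H\<^esub> f x' y"
    and f_right: "\<And>x y y'. x \<in> carrier G \<Longrightarrow> y \<in> carrier G \<Longrightarrow> y' \<in> carrier G \<Longrightarrow>
      f x (y \<otimes>\<^bsub>G\<^esub> y') = f x y \<otimes>\<^bsub>H\<^esub> f x y'"
    and fibre_left: "\<And>x x' y. x \<in> carrier G \<Longrightarrow> x' \<in> carrier G \<Longrightarrow> y \<in> carrier G \<Longrightarrow>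
      \<beta> x = \<beta> x' \<Longrightarrow> f x y = f x' y"
    and fibre_right: "\<And>x y y'. x \<in> carrier G \<Longrightarrow> y \<in> carrier G \<Longrightarrow> y' \<in> carrier G \<Longrightarrow>
      \<beta> y = \<beta> y' \<Longrightarrow> f x y = f x y'"
  obtains \<omega> where "\<omega> \<in> hom (tensor C) H"
    and "\<And>x y. x \<in> carrier G \<Longrightarrow> y \<in> carrier G \<Longrightarrow> \<omega> (tens C (\<beta> x) (\<beta> y)) = f x y"
proof -
  interpret G: monoid G by fact
  define r where "r = inv_into (carrier G) \<beta>"
  have r: "r c \<in> carrier G" "\<beta> (r c) = c" if "c \<in> carrier C" for c
    using that \<beta>(2) by (auto simp: r_def inv_into_into f_inv_into_f)
  define f' where "f' a b = f (r a) (r b)" for a b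
  have f'_\<beta>: "f' (\<beta> x) (\<beta> y) = f x y" if "x \<in> carrier G" "y \<in> carrier G" for x y
  proof -
    have "f (r (\<beta> x)) (r (\<beta> y)) = f x (r (\<beta> y))"
      using that \<beta> r by (intro fibre_left) auto
    also have "\<dots> = f x y"
      using that \<beta> r by (intro fibre_right) auto
    finally show ?thesis by (simp add: f'_def)
  qed
  have \<beta>_surj: "\<exists>x\<in>carrier G. c = \<beta> x" if "c \<in> carrier C" for c
    using that \<beta>(2) by auto
  have \<beta>_mult: "\<beta> x \<otimes>\<^bsub>C\<^esub> \<beta> y = \<beta> (x \<otimes>\<^bsub>G\<^esub> y)" if "x \<in> carrier G" "y \<in> carrier G" for x y
    using that \<beta>(1) by (simp add: hom_mult)
  have f'_closed: "f' a b \<in> carrier H" if "a \<in> carrier C" "b \<in> carrier C" for a b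
    using that r f_closed by (simp add: f'_def)
  have f'_left: "f' (a \<otimes>\<^bsub>C\<^esub> a') b = f' a b \<otimes>\<^bsub>H\<^esub> f' a' b"
    if "a \<in> carrier C" "a' \<in> carrier C" "b \<in> carrier C" for a a' b
    using that by (auto dest!: \<beta>_surj simp: \<beta>_mult f'_\<beta> f_left)
  have f'_right: "f' a (b \<otimes>\<^bsub>C\<^esub> b') = f' a b \<otimes>\<^bsub>H\<^esub> f' a b'"
    if "a \<in> carrier C" "b \<in> carrier C" "b' \<in> carrier C" for a b b'
    using that by (auto dest!: \<beta>_surj simp: \<beta>_mult f'_\<beta> f_right)
  obtain \<omega> where \<omega>: "\<omega> \<in> hom (tensor C) H"
    and \<omega>_tens: "\<And>a b. a \<in> carrier C \<Longrightarrow> b \<in> carrier C \<Longrightarrow> \<omega> (tens C a b) = f' a b"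
    using tensor_universal[OF \<open>monoid C\<close> \<open>comm_group H\<close> f'_closed f'_left f'_right] by blast
  show ?thesis
  proof (rule that[OF \<omega>])
    fix x y assume "x \<in> carrier G" "y \<in> carrier G"
    then show "\<omega> (tens C (\<beta> x) (\<beta> y)) = f x y"
      using hom_in_carrier[OF \<beta>(1)] by (simp add: \<omega>_tens f'_\<beta>)
  qed
qed

section \<open>Peiffer commutators in pre-crossed modules\<close>

locale pre_crossed =
  fixes M :: "('m,'a) monoid_scheme" and N :: "('n,'b) monoid_scheme"
    and d :: "'m \<Rightarrow> 'n" and act :: "'n \<Rightarrow> 'm \<Rightarrow> 'm"
  assumes pre_crossed_module: "pre_crossed_module M N d act"
begin

lemma group_M: "group M" and group_N: "group N" and d_hom: "d \<in> hom M N"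
  and aut_action: "aut_action N M act"
  and d_act: "n \<in> carrier N \<Longrightarrow> x \<in> carrier M \<Longrightarrow> d (act n x) = n \<otimes>\<^bsub>N\<^esub> d x \<otimes>\<^bsub>N\<^esub> inv\<^bsub>N\<^esub> n"
  using pre_crossed_module by (auto simp: pre_crossed_module_def)

sublocale M: group M by (rule group_M)
sublocale N: group N by (rule group_N)
sublocale d: group_hom M N d
  by (simp add: group_hom_def group_hom_axioms_def group_M group_N d_hom)

lemma act_hom: "n \<in> carrier N \<Longrightarrow> group_hom M M (act n)"
  using aut_action by (simp add: group_hom_def group_hom_axioms_def group_M aut_action_def)

lemma act_closed [simp]: "n \<in> carrier N \<Longrightarrow> x \<in> carrier M \<Longrightarrow> act n x \<in> carrier M"
  by (rule group_hom.hom_closed[OF act_hom])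

lemma act_mult [simp]:
  "n \<in> carrier N \<Longrightarrow> x \<in> carrier M \<Longrightarrow> y \<in> carrier M \<Longrightarrow> act n (x \<otimes>\<^bsub>M\<^esub> y) = act n x \<otimes>\<^bsub>M\<^esub> act n y"
  by (rule group_hom.hom_mult[OF act_hom])

lemma act_inv [simp]: "n \<in> carrier N \<Longrightarrow> x \<in> carrier M \<Longrightarrow> act n (inv\<^bsub>M\<^esub> x) = inv\<^bsub>M\<^esub> act n x"
  by (rule group_hom.hom_inv[OF act_hom])

lemma act_act:
  "n \<in> carrier N \<Longrightarrow> n' \<in> carrier N \<Longrightarrow> x \<in> carrier M \<Longrightarrow> act n (act n' x) = act (n \<otimes>\<^bsub>N\<^esub> n') x"
  using aut_action by (simp add: aut_action_def)

abbreviation w :: "'m \<Rightarrow> 'm \<Rightarrow> 'm" where "w \<equiv> peiffer M d act"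

lemma peiffer_closed [simp]: "x \<in> carrier M \<Longrightarrow> y \<in> carrier M \<Longrightarrow> w x y \<in> carrier M"
  by (simp add: peiffer_def)

lemma act_peiffer:
  assumes "n \<in> carrier N" "x \<in> carrier M" "y \<in> carrier M"
  shows "act n (w x y) = w (act n x) (act n y)"
proof -
  have "act n (act (d x) y) = act (n \<otimes>\<^bsub>N\<^esub> d x \<otimes>\<^bsub>N\<^esub> inv\<^bsub>N\<^esub> n) (act n y)"
    using assms by (simp add: act_act N.m_assoc)
  then show ?thesis
    using assms by (simp add: peiffer_def d_act)
qed

lemma d_peiffer: "x \<in> carrier M \<Longrightarrow> y \<in> carrier M \<Longrightarrow> d (w x y) = \<one>\<^bsub>N\<^esub>"
  by (simp add: peiffer_def d_act N.m_assoc)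

lemma conj_eq_peiffer:
  "x \<in> carrier M \<Longrightarrow> y \<in> carrier M \<Longrightarrow>
    x \<otimes>\<^bsub>M\<^esub> y \<otimes>\<^bsub>M\<^esub> inv\<^bsub>M\<^esub> x = inv\<^bsub>M\<^esub> w x y \<otimes>\<^bsub>M\<^esub> act (d x) y"
  by (simp add: peiffer_def M.m_assoc M.inv_mult_group)

definition peiffer_commutators :: "'m set"
  where "peiffer_commutators = {w x y |x y. x \<in> carrier M \<and> y \<in> carrier M}"

definition peiffer_commutators3 :: "'m set"
  where "peiffer_commutators3 =
    {w (w x y) z |x y z. x \<in> carrier M \<and> y \<in> carrier M \<and> z \<in> carrier M}
    \<union> {w x (w y z) |x y z. x \<in> carrier M \<and> y \<in> carrier M \<and> z \<in> carrier M}"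

lemma P2_eq: "P2 M d act = generate M peiffer_commutators"
  by (simp add: P2_def peiffer_commutators_def)

lemma P3_eq: "P3 M d act = generate M peiffer_commutators3"
  by (simp add: P3_def peiffer_commutators3_def)

lemma peiffer_commutatorsI: "x \<in> carrier M \<Longrightarrow> y \<in> carrier M \<Longrightarrow> w x y \<in> peiffer_commutators"
  unfolding peiffer_commutators_def by blast

lemma peiffer_commutatorsE:
  assumes "s \<in> peiffer_commutators"
  obtains x y where "x \<in> carrier M" "y \<in> carrier M" "s = w x y"
  using assms unfolding peiffer_commutators_def by blast

lemma peiffer_commutators3I:
  "x \<in> carrier M \<Longrightarrow> y \<in> carrier M \<Longrightarrow> z \<in> carrier M \<Longrightarrow> w (w x y) z \<in> peiffer_commutators3"
  "x \<in> carrier M \<Longrightarrow> y \<in> carrier M \<Longrightarrow> z \<in> carrier M \<Longrightarrow> w x (w y z) \<in> peiffer_commutators3"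
  unfolding peiffer_commutators3_def by blast+

lemma peiffer_commutators3E:
  assumes "s \<in> peiffer_commutators3"
  obtains x y z where "x \<in> carrier M" "y \<in> carrier M" "z \<in> carrier M" "s = w (w x y) z"
    | x y z where "x \<in> carrier M" "y \<in> carrier M" "z \<in> carrier M" "s = w x (w y z)"
  using assms unfolding peiffer_commutators3_def by blast

lemma peiffer_commutators_subset: "peiffer_commutators \<subseteq> carrier M"
  by (auto elim: peiffer_commutatorsE)

lemma peiffer_commutators3_subset: "peiffer_commutators3 \<subseteq> peiffer_commutators"
  by (auto elim!: peiffer_commutators3E intro!: peiffer_commutatorsI)

lemma act_peiffer_commutators3:
  "n \<in> carrier N \<Longrightarrow> act n ` peiffer_commutators3 \<subseteq> peiffer_commutators3"
  by (auto elim!: peiffer_commutators3E simp: act_peiffer intro!: peiffer_commutators3I)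

lemma P2_normal: "P2 M d act \<lhd> M"
  unfolding P2_eq
proof (rule M.normal_generate_if_conj_in_generate[OF peiffer_commutators_subset])
  fix s g assume s_mem: "s \<in> peiffer_commutators" and g: "g \<in> carrier M"
  from s_mem obtain x y where xy: "x \<in> carrier M" "y \<in> carrier M" and s: "s = w x y"
    by (rule peiffer_commutatorsE)
  have "inv\<^bsub>M\<^esub> w g s \<in> generate M peiffer_commutators"
    using g xy s by (intro generate.inv peiffer_commutatorsI) simp_all
  moreover have "act (d g) s \<in> generate M peiffer_commutators"
    using g xy s by (simp add: act_peiffer generate.incl peiffer_commutatorsI)
  ultimately show "g \<otimes>\<^bsub>M\<^esub> s \<otimes>\<^bsub>M\<^esub> inv\<^bsub>M\<^esub> g \<in> generate M peiffer_commutators"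
    using g xy s by (simp add: conj_eq_peiffer generate.eng)
qed

lemma P3_normal: "P3 M d act \<lhd> M"
  unfolding P3_eq
proof (rule M.normal_generate_if_conj_in_generate)
  show "peiffer_commutators3 \<subseteq> carrier M"
    using peiffer_commutators3_subset peiffer_commutators_subset by (rule order_trans)
  fix s g assume s: "s \<in> peiffer_commutators3" and g: "g \<in> carrier M"
  then have "s \<in> peiffer_commutators"
    using peiffer_commutators3_subset by blast
  then obtain x y where xy: "x \<in> carrier M" "y \<in> carrier M" and s_eq: "s = w x y"
    by (rule peiffer_commutatorsE)
  have "inv\<^bsub>M\<^esub> w g s \<in> generate M peiffer_commutators3"
    unfolding s_eq using g xy by (intro generate.inv peiffer_commutators3I)
  moreover have "act (d g) s \<in> act (d g) ` peiffer_commutators3"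
    using s by (rule imageI)
  then have "act (d g) s \<in> generate M peiffer_commutators3"
    using act_peiffer_commutators3[of "d g"] g by (intro generate.incl) auto
  ultimately show "g \<otimes>\<^bsub>M\<^esub> s \<otimes>\<^bsub>M\<^esub> inv\<^bsub>M\<^esub> g \<in> generate M peiffer_commutators3"
    using g xy s_eq by (simp add: conj_eq_peiffer generate.eng)
qed

lemma P3_subset_P2: "P3 M d act \<subseteq> P2 M d act"
  unfolding P2_eq P3_eq by (rule M.mono_generate[OF peiffer_commutators3_subset])

lemma P2_subset_kernel:
  assumes "group H" "h \<in> hom M H" "\<And>x y. x \<in> carrier M \<Longrightarrow> y \<in> carrier M \<Longrightarrow> h (w x y) = \<one>\<^bsub>H\<^esub>"
  shows "P2 M d act \<subseteq> kernel M H h"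
proof -
  interpret h: group_hom M H h
    by (simp add: group_hom_def group_hom_axioms_def group_M assms)
  show ?thesis
    unfolding P2_eq
    by (rule M.generate_subgroup_incl[OF _ h.subgroup_kernel])
      (auto simp: kernel_def assms(3) elim!: peiffer_commutatorsE)
qed

lemma d_P3: "x \<in> P3 M d act \<Longrightarrow> d x = \<one>\<^bsub>N\<^esub>"
  using P3_subset_P2 P2_subset_kernel[OF group_N d_hom d_peiffer] by (auto simp: kernel_def)

lemma act_P3: "n \<in> carrier N \<Longrightarrow> act n ` P3 M d act = P3 M d act"
  unfolding P3_eq
  using peiffer_commutators3_subset peiffer_commutators_subset
  by (intro aut_action_image_generate[OF group_N group_M aut_action _ act_peiffer_commutators3])
    auto

lemma group_Mcr: "group (Mcr M d act)"
  unfolding Mcr_def by (rule normal.factorgroup_is_group[OF P2_normal])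

lemma comm_group_Cgrp: "comm_group (Cgrp M d act)"
  unfolding Cgrp_def abelianization_def by (rule group.derived_quot_is_comm_group[OF group_Mcr])

lemma bar_hom: "bar M d act \<in> hom M (Cgrp M d act)"
proof -
  have "(#>\<^bsub>M\<^esub>) (P2 M d act) \<in> hom M (Mcr M d act)"
    unfolding Mcr_def by (rule normal.r_coset_hom_Mod[OF P2_normal])
  moreover have "ab_class (Mcr M d act) \<in> hom (Mcr M d act) (Cgrp M d act)"
    unfolding Cgrp_def abelianization_def ab_class_def
    by (intro normal.r_coset_hom_Mod group.derived_is_normal group.normal_self group_Mcr)
  ultimately show ?thesis
    unfolding bar_def[abs_def] using hom_compose by (fastforce simp: comp_def)
qed

lemma carrier_Cgrp: "carrier (Cgrp M d act) = bar M d act ` carrier M"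
  by (simp add: Cgrp_def abelianization_def Mcr_def carrier_FactGroup image_image bar_def
    ab_class_def)

lemma Cgrp_universal:
  assumes "comm_group H" "h \<in> hom M H"
    and kill: "\<And>x y. x \<in> carrier M \<Longrightarrow> y \<in> carrier M \<Longrightarrow> h (w x y) = \<one>\<^bsub>H\<^esub>"
  obtains g where "g \<in> hom (Cgrp M d act) H" "\<And>x. x \<in> carrier M \<Longrightarrow> g (bar M d act x) = h x"
proof -
  interpret H: comm_group H by fact
  interpret h: group_hom M H h
    by (simp add: group_hom_def group_hom_axioms_def group_M H.is_group assms)
  interpret Mcr: group "Mcr M d act" by (rule group_Mcr)
  obtain g1 where g1: "g1 \<in> hom (Mcr M d act) H"
    and g1_eq: "\<And>x. x \<in> carrier M \<Longrightarrow> g1 (P2 M d act #>\<^bsub>M\<^esub> x) = h x"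
    using h.FactGroup_universal_kernel[OF P2_normal P2_subset_kernel[OF H.is_group assms(2) kill]]
    unfolding Mcr_def by metis
  interpret g1: group_hom "Mcr M d act" H g1
    by (simp add: group_hom_def group_hom_axioms_def group_Mcr H.is_group g1)
  have "g1 ` derived (Mcr M d act) (carrier (Mcr M d act)) \<subseteq> {\<one>\<^bsub>H\<^esub>}"
    using g1.derived_img[of "carrier (Mcr M d act)"]
      H.derived_eq_singleton[of "g1 ` carrier (Mcr M d act)"]
    by (simp add: image_subset_iff)
  then have "derived (Mcr M d act) (carrier (Mcr M d act)) \<subseteq> kernel (Mcr M d act) H g1"
    using Mcr.derived_in_carrier[of "carrier (Mcr M d act)"] by (auto simp: kernel_def)
  then obtain g where "g \<in> hom (Cgrp M d act) H"
    and "\<And>X. X \<in> carrier (Mcr M d act) \<Longrightarrow> g (ab_class (Mcr M d act) X) = g1 X"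
    using g1.FactGroup_universal_kernel[OF Mcr.derived_is_normal[OF Mcr.normal_self]]
    unfolding Cgrp_def abelianization_def ab_class_def by metis
  with that show ?thesis
    by (simp add: bar_def g1_eq Mcr_def carrier_FactGroup)
qed

lemma hom_eq_if_bar_eq:
  assumes "comm_group H" "h \<in> hom M H"
    and "\<And>x y. x \<in> carrier M \<Longrightarrow> y \<in> carrier M \<Longrightarrow> h (w x y) = \<one>\<^bsub>H\<^esub>"
    and "x \<in> carrier M" "x' \<in> carrier M" "bar M d act x = bar M d act x'"
  shows "h x = h x'"
proof -
  obtain g where "\<And>x. x \<in> carrier M \<Longrightarrow> g (bar M d act x) = h x"
    using Cgrp_universal[OF assms(1-3)] by metis
  with assms(4-6) show ?thesis by metis
qed

end

section \<open>2-crossed modules modulo Peiffer commutators of length three\<close>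

locale two_crossed =
  fixes C2 :: "('c2,'a) monoid_scheme" and C1 :: "('c1,'b) monoid_scheme"
    and C0 :: "('c0,'c) monoid_scheme"
    and d2 :: "'c2 \<Rightarrow> 'c1" and d1 :: "'c1 \<Rightarrow> 'c0"
    and a1 :: "'c0 \<Rightarrow> 'c1 \<Rightarrow> 'c1" and a2 :: "'c0 \<Rightarrow> 'c2 \<Rightarrow> 'c2"
    and pf :: "'c1 \<Rightarrow> 'c1 \<Rightarrow> 'c2"
  assumes two_crossed_module: "two_crossed_module C2 C1 C0 d2 d1 a1 a2 pf"
begin

lemma group_C2: "group C2" and group_C1: "group C1" and group_C0: "group C0"
  and d2_hom: "d2 \<in> hom C2 C1" and d1_hom: "d1 \<in> hom C1 C0"
  and d1_d2: "l \<in> carrier C2 \<Longrightarrow> d1 (d2 l) = \<one>\<^bsub>C0\<^esub>"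
  and aut_action_C1: "aut_action C0 C1 a1" and aut_action_C2: "aut_action C0 C2 a2"
  and d2_a2: "n \<in> carrier C0 \<Longrightarrow> l \<in> carrier C2 \<Longrightarrow> d2 (a2 n l) = a1 n (d2 l)"
  and d1_a1: "n \<in> carrier C0 \<Longrightarrow> m \<in> carrier C1 \<Longrightarrow> d1 (a1 n m) = n \<otimes>\<^bsub>C0\<^esub> d1 m \<otimes>\<^bsub>C0\<^esub> inv\<^bsub>C0\<^esub> n"
  and pf_closed [simp]: "m \<in> carrier C1 \<Longrightarrow> m' \<in> carrier C1 \<Longrightarrow> pf m m' \<in> carrier C2"
  and d2_pf: "m \<in> carrier C1 \<Longrightarrow> m' \<in> carrier C1 \<Longrightarrow> d2 (pf m m') = peiffer C1 d1 a1 m m'"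
  and pf_d2_d2: "l \<in> carrier C2 \<Longrightarrow> l' \<in> carrier C2 \<Longrightarrow> pf (d2 l) (d2 l') = commutator C2 l' l"
  and pf_mult_left: "m \<in> carrier C1 \<Longrightarrow> m' \<in> carrier C1 \<Longrightarrow> m'' \<in> carrier C1 \<Longrightarrow>
    pf (m \<otimes>\<^bsub>C1\<^esub> m') m'' = a2 (d1 m) (pf m' m'') \<otimes>\<^bsub>C2\<^esub> pf m (m' \<otimes>\<^bsub>C1\<^esub> m'' \<otimes>\<^bsub>C1\<^esub> inv\<^bsub>C1\<^esub> m')"
  and pf_mult_right: "m \<in> carrier C1 \<Longrightarrow> m' \<in> carrier C1 \<Longrightarrow> m'' \<in> carrier C1 \<Longrightarrow>
    pf m (m' \<otimes>\<^bsub>C1\<^esub> m'') =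
      pf m m' \<otimes>\<^bsub>C2\<^esub> (pf (d2 (pf m m'')) (m \<otimes>\<^bsub>C1\<^esub> m' \<otimes>\<^bsub>C1\<^esub> inv\<^bsub>C1\<^esub> m) \<otimes>\<^bsub>C2\<^esub> pf m m'')"
  and pf_d2_sym: "m \<in> carrier C1 \<Longrightarrow> l \<in> carrier C2 \<Longrightarrow>
    pf m (d2 l) \<otimes>\<^bsub>C2\<^esub> pf (d2 l) m = a2 (d1 m) l \<otimes>\<^bsub>C2\<^esub> inv\<^bsub>C2\<^esub> l"
  and a2_pf: "n \<in> carrier C0 \<Longrightarrow> m \<in> carrier C1 \<Longrightarrow> m' \<in> carrier C1 \<Longrightarrow>
    a2 n (pf m m') = pf (a1 n m) (a1 n m')"
  using two_crossed_module unfolding two_crossed_module_def Let_def peiffer_def by auto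

sublocale pre_crossed C1 C0 d1 a1
  using group_C1 group_C0 d1_hom aut_action_C1 d1_a1
  by (simp add: pre_crossed_def pre_crossed_module_def)

abbreviation P :: "'c1 set" where "P \<equiv> P3 C1 d1 a1"
abbreviation P' :: "'c2 set" where "P' \<equiv> P3' C2 C1 d1 a1 pf"
abbreviation M :: "'c1 set monoid" where "M \<equiv> C1 Mod P"
abbreviation L :: "'c2 set monoid" where "L \<equiv> C2 Mod P'"
abbreviation q1 :: "'c1 \<Rightarrow> 'c1 set" where "q1 \<equiv> (#>\<^bsub>C1\<^esub>) P"
abbreviation q2 :: "'c2 \<Rightarrow> 'c2 set" where "q2 \<equiv> (#>\<^bsub>C2\<^esub>) P'"

declare mult_FactGroup [simp del] one_FactGroup [simp del]

sublocale C2: group C2 by (rule group_C2)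
sublocale d2: group_hom C2 C1 d2
  by (simp add: group_hom_def group_hom_axioms_def group_C2 group_C1 d2_hom)

lemma a2_closed [simp]: "n \<in> carrier C0 \<Longrightarrow> l \<in> carrier C2 \<Longrightarrow> a2 n l \<in> carrier C2"
  using aut_action_C2 unfolding aut_action_def by (blast intro: hom_in_carrier)

definition lifted_commutators3 :: "'c2 set"
  where "lifted_commutators3 =
    {pf (w x y) z |x y z. x \<in> carrier C1 \<and> y \<in> carrier C1 \<and> z \<in> carrier C1}
    \<union> {pf x (w y z) |x y z. x \<in> carrier C1 \<and> y \<in> carrier C1 \<and> z \<in> carrier C1}"

lemma P'_eq: "P' = generate C2 lifted_commutators3"
  by (simp add: P3'_def lifted_commutators3_def)

lemma lifted_commutators3I:
  "x \<in> carrier C1 \<Longrightarrow> y \<in> carrier C1 \<Longrightarrow> z \<in> carrier C1 \<Longrightarrow> pf (w x y) z \<in> lifted_commutators3"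
  "x \<in> carrier C1 \<Longrightarrow> y \<in> carrier C1 \<Longrightarrow> z \<in> carrier C1 \<Longrightarrow> pf x (w y z) \<in> lifted_commutators3"
  unfolding lifted_commutators3_def by blast+

lemma lifted_commutators3E:
  assumes "s \<in> lifted_commutators3"
  obtains x y z where "x \<in> carrier C1" "y \<in> carrier C1" "z \<in> carrier C1" "s = pf (w x y) z"
    | x y z where "x \<in> carrier C1" "y \<in> carrier C1" "z \<in> carrier C1" "s = pf x (w y z)"
  using assms unfolding lifted_commutators3_def by blast

lemma lifted_commutators3_subset: "lifted_commutators3 \<subseteq> carrier C2"
  by (auto elim: lifted_commutators3E)

lemma d2_lifted_commutators3: "d2 ` lifted_commutators3 = peiffer_commutators3"
proof
  show "d2 ` lifted_commutators3 \<subseteq> peiffer_commutators3"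
    by (auto elim!: lifted_commutators3E simp: d2_pf intro: peiffer_commutators3I)
  show "peiffer_commutators3 \<subseteq> d2 ` lifted_commutators3"
  proof
    fix s assume "s \<in> peiffer_commutators3"
    then show "s \<in> d2 ` lifted_commutators3"
    proof (cases rule: peiffer_commutators3E)
      case (1 x y z)
      then have "s = d2 (pf (w x y) z)" by (simp add: d2_pf)
      with 1 show ?thesis by (blast intro: lifted_commutators3I)
    next
      case (2 x y z)
      then have "s = d2 (pf x (w y z))" by (simp add: d2_pf)
      with 2 show ?thesis by (blast intro: lifted_commutators3I)
    qed
  qed
qed

lemma P'_normal: "P' \<lhd> C2"
  unfolding P'_eq
proof (rule C2.normal_generate_if_conj_in_generate[OF lifted_commutators3_subset])
  fix s g assume s: "s \<in> lifted_commutators3" and g: "g \<in> carrier C2"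
  then have s_carrier: "s \<in> carrier C2"
    using lifted_commutators3_subset by blast
  have "g \<otimes>\<^bsub>C2\<^esub> s \<otimes>\<^bsub>C2\<^esub> inv\<^bsub>C2\<^esub> g = pf (d2 s) (d2 g) \<otimes>\<^bsub>C2\<^esub> s"
    using g s_carrier by (simp add: pf_d2_d2 commutator_def C2.m_assoc)
  moreover have "pf (d2 s) (d2 g) \<in> lifted_commutators3"
    using s g by (auto elim!: lifted_commutators3E simp: d2_pf intro!: lifted_commutators3I)
  ultimately show "g \<otimes>\<^bsub>C2\<^esub> s \<otimes>\<^bsub>C2\<^esub> inv\<^bsub>C2\<^esub> g \<in> generate C2 lifted_commutators3"
    using s by (simp add: generate.eng generate.incl)
qed

lemma d2_P': "d2 ` P' = P"
  unfolding P'_eq P3_eq d2.generate_img[OF lifted_commutators3_subset, symmetric]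
  by (simp add: d2_lifted_commutators3)

lemma d1_P: "d1 ` P = {\<one>\<^bsub>C0\<^esub>}"
  using d_P3 subgroup.one_closed[OF normal_imp_subgroup[OF P3_normal]] by force

lemma a2_P': "n \<in> carrier C0 \<Longrightarrow> a2 n ` P' = P'"
  unfolding P'_eq
  by (rule aut_action_image_generate[OF group_C0 group_C2 aut_action_C2 lifted_commutators3_subset])
    (auto elim!: lifted_commutators3E simp: a2_pf act_peiffer intro!: lifted_commutators3I)

sublocale L: group L by (rule normal.factorgroup_is_group[OF P'_normal])
sublocale q2: group_hom C2 L q2
  by (simp add: group_hom_def group_hom_axioms_def group_C2 L.is_group
    normal.r_coset_hom_Mod[OF P'_normal])

lemma q2_P': "l \<in> P' \<Longrightarrow> q2 l = \<one>\<^bsub>L\<^esub>"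
  by (simp add: subgroup.rcos_const[OF normal_imp_subgroup[OF P'_normal] group_C2] one_FactGroup)

abbreviation pfL :: "'c1 \<Rightarrow> 'c1 \<Rightarrow> 'c2 set" where "pfL x y \<equiv> q2 (pf x y)"

lemma lifted_commutators3_subset_P': "lifted_commutators3 \<subseteq> P'"
  unfolding P'_eq by (auto intro: generate.incl)

lemma pfL_peiffer_left:
  "x \<in> carrier C1 \<Longrightarrow> y \<in> carrier C1 \<Longrightarrow> z \<in> carrier C1 \<Longrightarrow> pfL (w x y) z = \<one>\<^bsub>L\<^esub>"
  by (rule q2_P', rule subsetD[OF lifted_commutators3_subset_P' lifted_commutators3I(1)])

lemma pfL_peiffer_right:
  "x \<in> carrier C1 \<Longrightarrow> y \<in> carrier C1 \<Longrightarrow> z \<in> carrier C1 \<Longrightarrow> pfL x (w y z) = \<one>\<^bsub>L\<^esub>"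
  by (rule q2_P', rule subsetD[OF lifted_commutators3_subset_P' lifted_commutators3I(2)])

lemma pfL_commute:
  assumes "x \<in> carrier C1" "y \<in> carrier C1" "x' \<in> carrier C1" "y' \<in> carrier C1"
  shows "pfL x y \<otimes>\<^bsub>L\<^esub> pfL x' y' = pfL x' y' \<otimes>\<^bsub>L\<^esub> pfL x y"
proof (rule L.commute_if_commutator_one)
  have "commutator C2 (pf x y) (pf x' y') = pf (w x' y') (w x y)"
    using assms pf_d2_d2[of "pf x' y'" "pf x y"] by (simp add: d2_pf)
  then have "q2 (commutator C2 (pf x y) (pf x' y')) = \<one>\<^bsub>L\<^esub>"
    using assms by (simp only: pfL_peiffer_left peiffer_closed)
  then show "commutator L (pfL x y) (pfL x' y') = \<one>\<^bsub>L\<^esub>"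
    using assms by (simp only: q2.hom_commutator pf_closed)
qed (use assms in simp_all)

lemma pfL_mult_right:
  assumes x: "x \<in> carrier C1" and y: "y \<in> carrier C1" "y' \<in> carrier C1"
  shows "pfL x (y \<otimes>\<^bsub>C1\<^esub> y') = pfL x y \<otimes>\<^bsub>L\<^esub> pfL x y'"
proof -
  define k where "k = x \<otimes>\<^bsub>C1\<^esub> y \<otimes>\<^bsub>C1\<^esub> inv\<^bsub>C1\<^esub> x"
  have k: "k \<in> carrier C1" using x y by (simp add: k_def)
  have "pf x (y \<otimes>\<^bsub>C1\<^esub> y') = pf x y \<otimes>\<^bsub>C2\<^esub> (pf (w x y') k \<otimes>\<^bsub>C2\<^esub> pf x y')"
    using pf_mult_right[OF x y] x y by (simp add: d2_pf k_def)
  then have "pfL x (y \<otimes>\<^bsub>C1\<^esub> y') = pfL x y \<otimes>\<^bsub>L\<^esub> (pfL (w x y') k \<otimes>\<^bsub>L\<^esub> pfL x y')"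
    using x y k by (simp add: q2.hom_mult)
  also have "pfL (w x y') k = \<one>\<^bsub>L\<^esub>"
    using x y k by (simp add: pfL_peiffer_left)
  finally show ?thesis
    using x y by (simp)
qed

lemma pfL_hom_right: "x \<in> carrier C1 \<Longrightarrow> group_hom C1 L (pfL x)"
  by (intro group_hom.intro group_hom_axioms.intro homI group_C1 L.is_group)
    (simp_all add: pfL_mult_right)

lemma pfL_conj_right:
  assumes "x \<in> carrier C1" "k \<in> carrier C1" "y \<in> carrier C1"
  shows "pfL x (k \<otimes>\<^bsub>C1\<^esub> y \<otimes>\<^bsub>C1\<^esub> inv\<^bsub>C1\<^esub> k) = pfL x y"
proof -
  interpret h: group_hom C1 L "pfL x" by (rule pfL_hom_right[OF assms(1)])
  have "pfL x (k \<otimes>\<^bsub>C1\<^esub> y \<otimes>\<^bsub>C1\<^esub> inv\<^bsub>C1\<^esub> k) = pfL x y \<otimes>\<^bsub>L\<^esub> pfL x k \<otimes>\<^bsub>L\<^esub> inv\<^bsub>L\<^esub> pfL x k"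
    using assms pfL_commute[of x k x y] by (simp add: h.hom_inv)
  then show ?thesis
    using assms by (simp add: L.m_assoc)
qed

lemma q2_a2_pf:
  assumes x: "x \<in> carrier C1" and yz: "y \<in> carrier C1" "z \<in> carrier C1"
  shows "q2 (a2 (d1 x) (pf y z)) = pfL y z"
proof -
  have l: "pf y z \<in> carrier C2" and dx: "d1 x \<in> carrier C0"
    using x yz by (simp_all add: hom_in_carrier[OF d1_hom])
  have "a2 (d1 x) (pf y z) = pf x (w y z) \<otimes>\<^bsub>C2\<^esub> pf (w y z) x \<otimes>\<^bsub>C2\<^esub> pf y z"
    using pf_d2_sym[OF x l] x yz l dx by (simp add: d2_pf C2.m_assoc)
  then show ?thesis
    using x yz by (simp add: q2.hom_mult pfL_peiffer_left pfL_peiffer_right)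
qed

lemma pfL_mult_left:
  assumes "x \<in> carrier C1" "x' \<in> carrier C1" "y \<in> carrier C1"
  shows "pfL (x \<otimes>\<^bsub>C1\<^esub> x') y = pfL x y \<otimes>\<^bsub>L\<^esub> pfL x' y"
proof -
  have "pf (x \<otimes>\<^bsub>C1\<^esub> x') y = a2 (d1 x) (pf x' y) \<otimes>\<^bsub>C2\<^esub> pf x (x' \<otimes>\<^bsub>C1\<^esub> y \<otimes>\<^bsub>C1\<^esub> inv\<^bsub>C1\<^esub> x')"
    using pf_mult_left[OF assms] .
  then have "pfL (x \<otimes>\<^bsub>C1\<^esub> x') y = pfL x' y \<otimes>\<^bsub>L\<^esub> pfL x y"
    using assms by (simp add: q2.hom_mult q2_a2_pf pfL_conj_right)
  then show ?thesis
    using assms pfL_commute by simp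
qed

definition pfL_values :: "'c2 set set"
  where "pfL_values = {pfL x y |x y. x \<in> carrier C1 \<and> y \<in> carrier C1}"

lemma comm_group_pfL_values: "comm_group (subgroup_generated L pfL_values)"
  by (rule L.comm_group_subgroup_generated)
    (auto simp: pfL_values_def pfL_commute)

lemma pfL_in_subgroup:
  "x \<in> carrier C1 \<Longrightarrow> y \<in> carrier C1 \<Longrightarrow> pfL x y \<in> carrier (subgroup_generated L pfL_values)"
  unfolding carrier_subgroup_generated pfL_values_def by (rule generate.incl) auto

sublocale Mq: group M by (rule normal.factorgroup_is_group[OF P3_normal])
sublocale q1: group_hom C1 M q1
  by (simp add: group_hom_def group_hom_axioms_def group_C1 Mq.is_group
    normal.r_coset_hom_Mod[OF P3_normal])

lemma q1_P: "x \<in> P \<Longrightarrow> q1 x = \<one>\<^bsub>M\<^esub>"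
  by (simp add: subgroup.rcos_const[OF normal_imp_subgroup[OF P3_normal] group_C1] one_FactGroup)

lemma boundary_exists:
  obtains dM where "dM \<in> hom M C0" "\<And>x. x \<in> carrier C1 \<Longrightarrow> dM (q1 x) = d1 x"
proof -
  have "P \<subseteq> kernel C1 C0 d1"
    using d_P3 normal_imp_subgroup[OF P3_normal, THEN subgroup.subset] by (auto simp: kernel_def)
  then show ?thesis
    using d.FactGroup_universal_kernel[OF P3_normal] that by blast
qed

lemma delta_exists:
  obtains \<delta> where "\<delta> \<in> hom L M" "\<And>l. l \<in> carrier C2 \<Longrightarrow> \<delta> (q2 l) = q1 (d2 l)"
proof -
  interpret q1d2: group_hom C2 M "q1 \<circ> d2"
    by (simp add: group_hom_def group_hom_axioms_def group_C2 Mq.is_group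
      hom_compose[OF d2_hom q1.homh])
  have "P' \<subseteq> kernel C2 M (q1 \<circ> d2)"
    using d2_P' q1_P normal_imp_subgroup[OF P'_normal, THEN subgroup.subset]
    by (auto simp: kernel_def)
  with q1d2.FactGroup_universal_kernel[OF P'_normal] that show ?thesis
    by (metis comp_apply)
qed

end

section \<open>The induced quadratic module\<close>

locale two_crossed_quotient = two_crossed +
  fixes dM and \<delta>
  assumes dM_hom: "dM \<in> hom M C0" and dM_q1: "\<And>x. x \<in> carrier C1 \<Longrightarrow> dM (q1 x) = d1 x"
    and \<delta>_hom: "\<delta> \<in> hom L M" and \<delta>_q2: "\<And>l. l \<in> carrier C2 \<Longrightarrow> \<delta> (q2 l) = q1 (d2 l)"
begin

abbreviation actM where "actM n X \<equiv> a1 n ` X"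
abbreviation actL where "actL n X \<equiv> a2 n ` X"

lemma carrier_M: "carrier M = q1 ` carrier C1"
  by (rule carrier_FactGroup)

lemma carrier_L: "carrier L = q2 ` carrier C2"
  by (rule carrier_FactGroup)

lemma actM_q1: "n \<in> carrier C0 \<Longrightarrow> x \<in> carrier C1 \<Longrightarrow> actM n (q1 x) = q1 (a1 n x)"
  by (rule aut_action_image_rcos[OF aut_action
    normal_imp_subgroup[OF P3_normal, THEN subgroup.subset] _ _ act_P3])

lemma actL_q2: "n \<in> carrier C0 \<Longrightarrow> l \<in> carrier C2 \<Longrightarrow> actL n (q2 l) = q2 (a2 n l)"
  by (rule aut_action_image_rcos[OF aut_action_C2
    normal_imp_subgroup[OF P'_normal, THEN subgroup.subset] _ _ a2_P'])

lemma aut_action_M: "aut_action C0 M actM"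
  by (rule aut_action_FactGroup[OF aut_action P3_normal act_P3])

lemma aut_action_L: "aut_action C0 L actL"
  by (rule aut_action_FactGroup[OF aut_action_C2 P'_normal a2_P'])

sublocale PM: pre_crossed M C0 dM actM
  unfolding pre_crossed_def pre_crossed_module_def
proof (intro conjI ballI Mq.is_group group_C0 dM_hom aut_action_M)
  fix n X assume n: "n \<in> carrier C0" and "X \<in> carrier M"
  then obtain x where "x \<in> carrier C1" "X = q1 x" by (auto simp: carrier_M)
  with n show "dM (actM n X) = n \<otimes>\<^bsub>C0\<^esub> dM X \<otimes>\<^bsub>C0\<^esub> inv\<^bsub>C0\<^esub> n"
    by (simp add: actM_q1 dM_q1 d1_a1)
qed

lemma peiffer_q1: "x \<in> carrier C1 \<Longrightarrow> y \<in> carrier C1 \<Longrightarrow> PM.w (q1 x) (q1 y) = q1 (w x y)"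
  by (simp add: peiffer_def actM_q1 dM_q1)

lemma peiffer_commutators3_M: "PM.peiffer_commutators3 \<subseteq> q1 ` peiffer_commutators3"
proof
  fix s assume "s \<in> PM.peiffer_commutators3"
  then show "s \<in> q1 ` peiffer_commutators3"
  proof (cases rule: PM.peiffer_commutators3E)
    case (1 X Y Z)
    then obtain x y z where xyz: "x \<in> carrier C1" "y \<in> carrier C1" "z \<in> carrier C1"
      and "X = q1 x" "Y = q1 y" "Z = q1 z"
      by (auto simp: carrier_M)
    with 1 have "s = q1 (w (w x y) z)" by (simp add: peiffer_q1)
    with xyz show ?thesis by (blast intro: peiffer_commutators3I)
  next
    case (2 X Y Z)
    then obtain x y z where xyz: "x \<in> carrier C1" "y \<in> carrier C1" "z \<in> carrier C1"
      and "X = q1 x" "Y = q1 y" "Z = q1 z"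
      by (auto simp: carrier_M)
    with 2 have "s = q1 (w x (w y z))" by (simp add: peiffer_q1)
    with xyz show ?thesis by (blast intro: peiffer_commutators3I)
  qed
qed

lemma nil2_module_M: "nil2_module M C0 dM actM"
proof -
  have "q1 ` peiffer_commutators3 \<subseteq> {\<one>\<^bsub>M\<^esub>}"
    using q1_P generate.incl[of _ peiffer_commutators3 C1] by (auto simp: P3_eq)
  with peiffer_commutators3_M have "P3 M dM actM \<subseteq> {\<one>\<^bsub>M\<^esub>}"
    unfolding PM.P3_eq by (intro Mq.generate_subgroup_incl[OF _ Mq.triv_subgroup]) auto
  then have "P3 M dM actM = {\<one>\<^bsub>M\<^esub>}"
    unfolding PM.P3_eq using generate.one by blast
  then show ?thesis
    by (simp add: nil2_module_def PM.pre_crossed_module)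
qed

abbreviation CC where "CC \<equiv> Cgrp M dM actM"
abbreviation bq where "bq x \<equiv> bar M dM actM (q1 x)"

lemma bq_hom: "(\<lambda>x. bq x) \<in> hom C1 CC"
  using hom_compose[OF q1.homh PM.bar_hom] by (simp add: comp_def)

lemma carrier_CC: "carrier CC = (\<lambda>x. bq x) ` carrier C1"
  by (simp add: PM.carrier_Cgrp carrier_M image_image)

lemma hom_eq_if_bq_eq:
  assumes H: "comm_group H" and h: "h \<in> hom C1 H"
    and kill: "\<And>x y. x \<in> carrier C1 \<Longrightarrow> y \<in> carrier C1 \<Longrightarrow> h (w x y) = \<one>\<^bsub>H\<^esub>"
    and x: "x \<in> carrier C1" "x' \<in> carrier C1" and eq: "bq x = bq x'"
  shows "h x = h x'"
proof -
  interpret H: comm_group H by fact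
  interpret h: group_hom C1 H h
    by (simp add: group_hom_def group_hom_axioms_def group_C1 H.is_group h)
  have "P \<subseteq> kernel C1 H h"
    using P3_subset_P2 P2_subset_kernel[OF H.is_group h kill] by blast
  then obtain h1 where h1: "h1 \<in> hom M H" and h1_q1: "\<And>x. x \<in> carrier C1 \<Longrightarrow> h1 (q1 x) = h x"
    using h.FactGroup_universal_kernel[OF P3_normal] by blast
  have "h1 (PM.w X Y) = \<one>\<^bsub>H\<^esub>" if "X \<in> carrier M" "Y \<in> carrier M" for X Y
    using that by (auto simp: carrier_M peiffer_q1 h1_q1 kill)
  with h1 x eq have "h1 (q1 x) = h1 (q1 x')"
    by (intro PM.hom_eq_if_bar_eq[OF H]) auto
  with x show ?thesis by (simp add: h1_q1)
qed

lemma omega_exists: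
  obtains \<omega> where "\<omega> \<in> hom (tensor CC) L"
    and "\<And>x y. x \<in> carrier C1 \<Longrightarrow> y \<in> carrier C1 \<Longrightarrow> \<omega> (tens CC (bq x) (bq y)) = pfL x y"
proof -
  let ?A = "subgroup_generated L pfL_values"
  have A: "comm_group ?A" by (rule comm_group_pfL_values)
  have left: "(\<lambda>x. pfL x y) \<in> hom C1 ?A" if "y \<in> carrier C1" for y
    using that by (intro homI) (simp_all add: pfL_in_subgroup pfL_mult_left)
  have right: "pfL x \<in> hom C1 ?A" if "x \<in> carrier C1" for x
    using that by (intro homI) (simp_all add: pfL_in_subgroup pfL_mult_right)
  have fibre_left: "pfL x y = pfL x' y"
    if "x \<in> carrier C1" "x' \<in> carrier C1" "y \<in> carrier C1" "bq x = bq x'" for x x' y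
    using that by (intro hom_eq_if_bq_eq[OF A left]) (simp_all add: pfL_peiffer_left)
  have fibre_right: "pfL x y = pfL x y'"
    if "x \<in> carrier C1" "y \<in> carrier C1" "y' \<in> carrier C1" "bq y = bq y'" for x y y'
    using that by (intro hom_eq_if_bq_eq[OF A right]) (simp_all add: pfL_peiffer_right)
  have mult_left: "pfL (x \<otimes>\<^bsub>C1\<^esub> x') y = pfL x y \<otimes>\<^bsub>?A\<^esub> pfL x' y"
    if "x \<in> carrier C1" "x' \<in> carrier C1" "y \<in> carrier C1" for x x' y
    using that by (simp add: pfL_mult_left)
  have mult_right: "pfL x (y \<otimes>\<^bsub>C1\<^esub> y') = pfL x y \<otimes>\<^bsub>?A\<^esub> pfL x y'"
    if "x \<in> carrier C1" "y \<in> carrier C1" "y' \<in> carrier C1" for x y y'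
    using that by (simp add: pfL_mult_right)
  obtain \<omega> where \<omega>: "\<omega> \<in> hom (tensor CC) ?A"
    and \<omega>_bq: "\<And>x y. x \<in> carrier C1 \<Longrightarrow> y \<in> carrier C1 \<Longrightarrow> \<omega> (tens CC (bq x) (bq y)) = pfL x y"
    using tensor_universal_surj[where f = pfL, OF group.is_monoid[OF group_C1]
        group.is_monoid[OF comm_group.axioms(2)[OF PM.comm_group_Cgrp]] A bq_hom
        carrier_CC[symmetric] pfL_in_subgroup mult_left mult_right fibre_left fibre_right]
    by blast
  moreover have "\<omega> \<in> hom (tensor CC) L"
    using \<omega> hom_into_subgroup_eq_gen[OF L.is_group] by blast
  ultimately show ?thesis using that by blast
qed

context
  fixes \<omega>
  assumes \<omega>_hom: "\<omega> \<in> hom (tensor CC) L"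
    and \<omega>_bq: "\<And>x y. x \<in> carrier C1 \<Longrightarrow> y \<in> carrier C1 \<Longrightarrow> \<omega> (tens CC (bq x) (bq y)) = pfL x y"
begin

lemma delta_omega:
  assumes "X \<in> carrier M" "Y \<in> carrier M"
  shows "\<delta> (\<omega> (tens CC (bar M dM actM X) (bar M dM actM Y))) = PM.w X Y"
proof -
  obtain x y where "x \<in> carrier C1" "y \<in> carrier C1" "X = q1 x" "Y = q1 y"
    using assms by (auto simp: carrier_M)
  then show ?thesis
    by (simp add: \<omega>_bq \<delta>_q2 d2_pf peiffer_q1)
qed

lemma omega_equivariant:
  assumes "n \<in> carrier C0" "X \<in> carrier M" "Y \<in> carrier M"
  shows "\<omega> (tens CC (bar M dM actM (actM n X)) (bar M dM actM (actM n Y)))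
    = actL n (\<omega> (tens CC (bar M dM actM X) (bar M dM actM Y)))"
proof -
  obtain x y where "x \<in> carrier C1" "y \<in> carrier C1" "X = q1 x" "Y = q1 y"
    using assms by (auto simp: carrier_M)
  with assms(1) show ?thesis
    by (simp add: actM_q1 actL_q2 \<omega>_bq a2_pf)
qed

lemma delta_equivariant:
  assumes "n \<in> carrier C0" "a \<in> carrier L"
  shows "\<delta> (actL n a) = actM n (\<delta> a)"
proof -
  obtain l where "l \<in> carrier C2" "a = q2 l"
    using assms by (auto simp: carrier_L)
  with assms(1) show ?thesis
    by (simp add: actM_q1 actL_q2 \<delta>_q2 d2_a2)
qed

lemma boundary_delta: "a \<in> carrier L \<Longrightarrow> dM (\<delta> a) = \<one>\<^bsub>C0\<^esub>"
  by (auto simp: carrier_L \<delta>_q2 dM_q1 d1_d2)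

lemma act_boundary_L:
  assumes "a \<in> carrier L" "X \<in> carrier M"
  shows "actL (dM X) a = \<omega> (tens CC (bar M dM actM X) (bar M dM actM (\<delta> a))
      \<otimes>\<^bsub>tensor CC\<^esub> tens CC (bar M dM actM (\<delta> a)) (bar M dM actM X)) \<otimes>\<^bsub>L\<^esub> a"
proof -
  obtain l x where l: "l \<in> carrier C2" "a = q2 l" and x: "x \<in> carrier C1" "X = q1 x"
    using assms by (auto simp: carrier_L carrier_M)
  have tens: "tens CC (bq u) (bq v) \<in> carrier (tensor CC)" if "u \<in> carrier C1" "v \<in> carrier C1"
    for u v
    using that hom_in_carrier[OF bq_hom] by (simp add: tens_closed)
  have "\<omega> (tens CC (bq x) (bq (d2 l)) \<otimes>\<^bsub>tensor CC\<^esub> tens CC (bq (d2 l)) (bq x)) \<otimes>\<^bsub>L\<^esub> q2 l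
      = q2 (pf x (d2 l) \<otimes>\<^bsub>C2\<^esub> pf (d2 l) x \<otimes>\<^bsub>C2\<^esub> l)"
    using l x tens by (simp add: hom_mult[OF \<omega>_hom] \<omega>_bq q2.hom_mult)
  also have "\<dots> = q2 (a2 (d1 x) l)"
    using l x by (simp add: pf_d2_sym C2.m_assoc)
  finally show ?thesis
    using l x by (simp add: dM_q1 actL_q2 \<delta>_q2)
qed

lemma omega_delta_delta:
  assumes "a \<in> carrier L" "c \<in> carrier L"
  shows "\<omega> (tens CC (bar M dM actM (\<delta> a)) (bar M dM actM (\<delta> c))) = commutator L c a"
proof -
  obtain l l' where "l \<in> carrier C2" "a = q2 l" "l' \<in> carrier C2" "c = q2 l'"
    using assms by (auto simp: carrier_L)
  then show ?thesis
    by (simp add: \<delta>_q2 \<omega>_bq pf_d2_d2 q2.hom_commutator)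
qed

lemma quadratic_module: "quadratic_module L M C0 \<omega> \<delta> dM actM actL"
  unfolding quadratic_module_def Let_def
proof (intro conjI ballI exI)
  show "\<delta> \<circ> \<omega> \<in> hom (tensor CC) M"
    using \<omega>_hom \<delta>_hom by (rule hom_compose)
qed (simp_all add: nil2_module_M L.is_group \<omega>_hom \<delta>_hom boundary_delta delta_omega aut_action_L
  omega_equivariant delta_equivariant act_boundary_L omega_delta_delta)

end

end

lemma (in two_crossed) quadratic_module_exists:
  "\<exists>d \<delta> \<omega> actM actL.
       d \<in> hom M C0 \<and> (\<forall>x\<in>carrier C1. d (q1 x) = d1 x) \<and>
       \<delta> \<in> hom L M \<and> (\<forall>l\<in>carrier C2. \<delta> (q2 l) = q1 (d2 l)) \<and>
       \<omega> \<in> hom (tensor (Cgrp M d actM)) L \<and>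
       (\<forall>x\<in>carrier C1. \<forall>y\<in>carrier C1.
          \<omega> (tens (Cgrp M d actM) (bar M d actM (q1 x)) (bar M d actM (q1 y))) = q2 (pf x y)) \<and>
       (\<forall>n\<in>carrier C0. \<forall>x\<in>carrier C1. actM n (q1 x) = q1 (a1 n x)) \<and>
       (\<forall>n\<in>carrier C0. \<forall>l\<in>carrier C2. actL n (q2 l) = q2 (a2 n l)) \<and>
       quadratic_module L M C0 \<omega> \<delta> d actM actL"
proof -
  obtain dM where dM: "dM \<in> hom M C0" "\<And>x. x \<in> carrier C1 \<Longrightarrow> dM (q1 x) = d1 x"
    using boundary_exists by blast
  obtain \<delta> where \<delta>: "\<delta> \<in> hom L M" "\<And>l. l \<in> carrier C2 \<Longrightarrow> \<delta> (q2 l) = q1 (d2 l)"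
    using delta_exists by blast
  interpret two_crossed_quotient C2 C1 C0 d2 d1 a1 a2 pf dM \<delta>
    using dM \<delta> by unfold_locales
  obtain \<omega> where \<omega>: "\<omega> \<in> hom (tensor CC) L"
    "\<And>x y. x \<in> carrier C1 \<Longrightarrow> y \<in> carrier C1 \<Longrightarrow> \<omega> (tens CC (bq x) (bq y)) = pfL x y"
    using omega_exists by blast
  show ?thesis
    by (intro exI[of _ dM] exI[of _ \<delta>] exI[of _ \<omega>] exI[of _ "\<lambda>n X. a1 n ` X"]
        exI[of _ "\<lambda>n X. a2 n ` X"] conjI ballI)
      (simp_all add: dM \<delta> \<omega> actM_q1 actL_q2 quadratic_module[OF \<omega>])
qed

theorem proposition5p2:
  fixes C2 :: "('c2,'a) monoid_scheme" and C1 :: "('c1,'b) monoid_scheme"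
    and C0 :: "('c0,'c) monoid_scheme"
    and d2 :: "'c2 \<Rightarrow> 'c1" and d1 :: "'c1 \<Rightarrow> 'c0"
    and a1 :: "'c0 \<Rightarrow> 'c1 \<Rightarrow> 'c1" and a2 :: "'c0 \<Rightarrow> 'c2 \<Rightarrow> 'c2"
    and pf :: "'c1 \<Rightarrow> 'c1 \<Rightarrow> 'c2"
  assumes X: "two_crossed_module C2 C1 C0 d2 d1 a1 a2 pf"
  defines "P \<equiv> P3 C1 d1 a1" and "P' \<equiv> P3' C2 C1 d1 a1 pf"
  defines "M \<equiv> C1 Mod P" and "L \<equiv> C2 Mod P'"
  defines "q1 \<equiv> (\<lambda>x. P #>\<^bsub>C1\<^esub> x)" and "q2 \<equiv> (\<lambda>l. P' #>\<^bsub>C2\<^esub> l)"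
  shows "P \<lhd> C1 \<and> P' \<lhd> C2 \<and> d1 ` P = {\<one>\<^bsub>C0\<^esub>} \<and> d2 ` P' = P \<and>
    (\<exists>d \<delta> \<omega> actM actL.
       d \<in> hom M C0 \<and> (\<forall>x\<in>carrier C1. d (q1 x) = d1 x) \<and>
       \<delta> \<in> hom L M \<and> (\<forall>l\<in>carrier C2. \<delta> (q2 l) = q1 (d2 l)) \<and>
       \<omega> \<in> hom (tensor (Cgrp M d actM)) L \<and>
       (\<forall>x\<in>carrier C1. \<forall>y\<in>carrier C1.
          \<omega> (tens (Cgrp M d actM) (bar M d actM (q1 x)) (bar M d actM (q1 y))) = q2 (pf x y)) \<and>
       (\<forall>n\<in>carrier C0. \<forall>x\<in>carrier C1. actM n (q1 x) = q1 (a1 n x)) \<and>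
       (\<forall>n\<in>carrier C0. \<forall>l\<in>carrier C2. actL n (q2 l) = q2 (a2 n l)) \<and>
       quadratic_module L M C0 \<omega> \<delta> d actM actL)"
proof -
  interpret two_crossed C2 C1 C0 d2 d1 a1 a2 pf by (rule two_crossed.intro[OF X])
  show ?thesis
    unfolding P_def P'_def M_def L_def q1_def q2_def
    by (intro conjI P3_normal P'_normal d1_P d2_P' quadratic_module_exists)
qed

end
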